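(* Let $C>0$ and $a,b\in\mathbb{R}$, and let $w(x)=Ce^{ax+b}$. For $\sigma>0$ and $x,y\in\mathbb{R}$ define the one-step transition density $$p_1(x\mid y,\sigma,C,a,b)=\frac{k_\sigma(x;y)\,w(x)}{\int_{\mathbb{R}}k_\sigma(z;y)\,w(z)\,\mathrm{d}z},$$ where $k_\sigma(\cdot;y)$ is the Gaussian density with mean $y$ and standard deviation $\sigma$, and for $n\in\mathbb{N}$ define the $n$-step density $$p_n(x_n\mid x_0,\sigma,C,a,b)=\int_{\mathbb{R}^{n-1}}\prod_{k=1}^{n}p_1(x_k\mid x_{k-1},\sigma,C,a,b)\,\mathrm{d}x_1\cdots\mathrm{d}x_{n-1}.$$ Then the model is robust of degree $n$ for every $n\in\mathbb{N}$ with parameter transformation $g_n(\sigma,C,a,b)=(\sqrt{n}\,\sigma,C,a,b)$; that is, for all $n\in\mathbb{N}$, $\sigma>0$ and $x,y\in\mathbb{R}$, $$p_n(x\mid y,\sigma,C,a,b)=p_1(x\mid y,\sqrt{n}\,\sigma,C,a,b).$$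
   Context: This concerns a one-dimensional discrete-time Markov movement model (locations $X_t\in\mathbb{R}$ at times $0,\tau,2\tau,\dots$) whose one-step transition density is a Gaussian movement kernel multiplied by a positive spatial weighting function $w$ and renormalized, as written in the claim. A model is called robust of degree $n$ if there is an injective map $g_n$ on the parameter space with $p_n(x\mid y,\bm\theta)=p_1(x\mid y,g_n(\bm\theta))$ for all $x,y$. *)

theory Defs
  imports "HOL-Probability.Probability"
begin

definition wfun :: "real \<Rightarrow> real \<Rightarrow> real \<Rightarrow> real \<Rightarrow> real" where
  "wfun C a b x = C * exp (a * x + b)"

definition kern :: "real \<Rightarrow> real \<Rightarrow> real \<Rightarrow> real" where
  "kern \<sigma> x y = normal_density y \<sigma> x"

definition p1 :: "real \<Rightarrow> real \<Rightarrow> real \<Rightarrow> real \<Rightarrow> real \<Rightarrow> real \<Rightarrow> real" where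
  "p1 x y \<sigma> C a b =
     kern \<sigma> x y * wfun C a b x / (LINT z|lborel. kern \<sigma> z y * wfun C a b z)"

definition path_pts :: "nat \<Rightarrow> real \<Rightarrow> real \<Rightarrow> (nat \<Rightarrow> real) \<Rightarrow> nat \<Rightarrow> real" where
  "path_pts n x y xs k = (if k = 0 then y else if k = n then x else xs k)"

definition pn :: "nat \<Rightarrow> real \<Rightarrow> real \<Rightarrow> real \<Rightarrow> real \<Rightarrow> real \<Rightarrow> real \<Rightarrow> real" where
  "pn n x y \<sigma> C a b =
     (LINT xs | PiM {1..<n} (\<lambda>_. lborel).
        (\<Prod>k\<in>{1..n}. p1 (path_pts n x y xs k) (path_pts n x y xs (k - 1)) \<sigma> C a b))"

end

theory Submission
  imports Defs
begin

text \<open>Multiplying the Gaussian kernel by \<open>w\<close> only tilts it: completing the square shows that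
  \<open>k\<^sub>\<sigma>(x; y) w(x)\<close> is a constant multiple of the normal density with mean \<open>y + a\<sigma>\<^sup>2\<close>, so
  \<open>p\<^sub>1\<close> is a Gaussian random walk with drift \<open>a\<sigma>\<^sup>2\<close> and variance \<open>\<sigma>\<^sup>2\<close>. Integrating out the
  intermediate points one at a time convolves these Gaussians, and after \<open>n\<close> steps the drift is
  \<open>n a \<sigma>\<^sup>2 = a (\<surd>n \<sigma>)\<^sup>2\<close> and the variance \<open>n \<sigma>\<^sup>2\<close>, which is \<open>p\<^sub>1\<close> with \<open>\<sigma>\<close> replaced by \<open>\<surd>n \<sigma>\<close>.\<close>

lemma normal_density_mult_exp_linear:
  assumes "\<sigma> > 0"
  shows "normal_density \<mu> \<sigma> x * exp (a * x)
       = exp (a * \<mu> + a\<^sup>2 * \<sigma>\<^sup>2 / 2) * normal_density (\<mu> + a * \<sigma>\<^sup>2) \<sigma> x"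
proof -
  have "- ((x - \<mu>)\<^sup>2) / (2 * \<sigma>\<^sup>2) + a * x
      = (a * \<mu> + a\<^sup>2 * \<sigma>\<^sup>2 / 2) + - ((x - (\<mu> + a * \<sigma>\<^sup>2))\<^sup>2) / (2 * \<sigma>\<^sup>2)"
    using assms by (simp add: field_simps power2_eq_square)
  then show ?thesis
    unfolding normal_density_def by (simp add: exp_add[symmetric])
qed

lemma kern_mult_wfun:
  assumes "\<sigma> > 0"
  shows "kern \<sigma> x y * wfun C a b x
       = C * exp (b + a * y + a\<^sup>2 * \<sigma>\<^sup>2 / 2) * normal_density (y + a * \<sigma>\<^sup>2) \<sigma> x"
  using normal_density_mult_exp_linear[OF assms, of y x a]
  unfolding kern_def wfun_def by (simp add: exp_add algebra_simps)

lemma p1_eq_normal_density: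
  assumes "\<sigma> > 0" "C > 0"
  shows "p1 x y \<sigma> C a b = normal_density (y + a * \<sigma>\<^sup>2) \<sigma> x"
proof -
  have "(LINT z|lborel. kern \<sigma> z y * wfun C a b z) = C * exp (b + a * y + a\<^sup>2 * \<sigma>\<^sup>2 / 2)"
    using integral_normal_density[OF assms(1)] by (simp add: kern_mult_wfun[OF assms(1)])
  then show ?thesis
    unfolding p1_def using assms by (simp add: kern_mult_wfun)
qed

lemma nn_integral_normal_density_drift_conv:
  assumes "\<sigma> > 0" "s > 0"
  shows "(\<integral>\<^sup>+z. ennreal (normal_density (z + m) \<sigma> x * normal_density \<mu> s z) \<partial>lborel)
       = ennreal (normal_density (\<mu> + m) (sqrt (\<sigma>\<^sup>2 + s\<^sup>2)) x)"
proof -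
  let ?f = "\<lambda>z. ennreal (normal_density (z + m) \<sigma> x * normal_density \<mu> s z)"
  have "?f \<in> borel_measurable borel"
    unfolding normal_density_def by measurable
  then have "(\<integral>\<^sup>+z. ?f z \<partial>lborel) = (\<integral>\<^sup>+u. ?f (\<mu> + u) \<partial>lborel)"
    using nn_integral_real_affine[of ?f 1 \<mu>] by simp
  also have "\<dots> = (\<integral>\<^sup>+u. ennreal (normal_density 0 \<sigma> ((x - m - \<mu>) - u) * normal_density 0 s u) \<partial>lborel)"
    by (auto intro!: nn_integral_cong simp: normal_density_def algebra_simps)
  also have "\<dots> = ennreal (normal_density 0 (sqrt (\<sigma>\<^sup>2 + s\<^sup>2)) (x - m - \<mu>))"
    using conv_normal_density_zero_mean[OF assms] by metis
  also have "\<dots> = ennreal (normal_density (\<mu> + m) (sqrt (\<sigma>\<^sup>2 + s\<^sup>2)) x)"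
    by (simp add: normal_density_def algebra_simps)
  finally show ?thesis .
qed

text \<open>The integrand of \<open>pn\<close> for an arbitrary kernel \<open>f\<close>; \<open>f u v\<close> weighs a step from \<open>u\<close> to \<open>v\<close>,
  so \<open>p\<^sub>1\<close> enters as \<open>\<lambda>u v. p1 v u \<sigma> C a b\<close>.\<close>

definition path_prod :: "nat \<Rightarrow> (real \<Rightarrow> real \<Rightarrow> real) \<Rightarrow> real \<Rightarrow> real \<Rightarrow> (nat \<Rightarrow> real) \<Rightarrow> real" where
  "path_prod n f x y xs = (\<Prod>k\<in>{1..n}. f (path_pts n x y xs (k - 1)) (path_pts n x y xs k))"

lemma path_prod_Suc_fun_upd:
  assumes "n \<ge> 1"
  shows "path_prod (Suc n) f x y (xs(n := z)) = path_prod n f z y xs * f z x"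
proof -
  have "{1..Suc n} = insert (Suc n) {1..n}" by auto
  moreover have "path_pts (Suc n) x y (xs(n := z)) k = path_pts n z y xs k" if "k \<le> n" for k
    using that by (auto simp: path_pts_def)
  moreover have "path_pts (Suc n) x y (xs(n := z)) (Suc n) = x" "path_pts n z y xs n = z"
    using assms by (auto simp: path_pts_def)
  ultimately show ?thesis
    unfolding path_prod_def by (auto simp: mult.commute intro!: prod.cong)
qed

lemma measurable_path_pts:
  assumes "k \<le> n"
  shows "(\<lambda>xs. path_pts n x y xs k) \<in> borel_measurable (PiM {1..<n} (\<lambda>_. lborel))"
proof (cases "k \<in> {1..<n}")
  case True
  then show ?thesis
    using measurable_component_singleton[OF True, of "\<lambda>_. lborel"]
    by (simp add: path_pts_def)
next
  case False
  then have "k = 0 \<or> k = n" using assms by auto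
  then show ?thesis
    unfolding path_pts_def by (cases "k = 0") auto
qed

lemma borel_measurable_path_prod:
  assumes "case_prod f \<in> borel_measurable borel"
  shows "path_prod n f x y \<in> borel_measurable (PiM {1..<n} (\<lambda>_. lborel))"
proof -
  have "(\<lambda>xs. f (path_pts n x y xs (k - 1)) (path_pts n x y xs k))
      \<in> borel_measurable (PiM {1..<n} (\<lambda>_. lborel))" if "k \<le> n" for k
    using measurable_compose[OF measurable_Pair[OF measurable_path_pts measurable_path_pts]
        assms[unfolded borel_prod[symmetric]]] that
    by simp
  then show ?thesis
    unfolding path_prod_def[abs_def] by (auto intro!: borel_measurable_prod)
qed

lemma nn_integral_path_prod_Suc:
  assumes "n \<ge> 1" and f: "case_prod f \<in> borel_measurable borel" and "\<And>u v. f u v \<ge> 0"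
  shows "(\<integral>\<^sup>+xs. ennreal (path_prod (Suc n) f x y xs) \<partial>PiM {1..<Suc n} (\<lambda>_. lborel))
       = (\<integral>\<^sup>+z. (\<integral>\<^sup>+xs. ennreal (path_prod n f z y xs) \<partial>PiM {1..<n} (\<lambda>_. lborel))
                 * ennreal (f z x) \<partial>lborel)"
proof -
  interpret product_sigma_finite "\<lambda>_. lborel" by standard
  have I: "{1..<Suc n} = insert n {1..<n}" using assms(1) by auto
  have nonneg: "path_prod n f z y xs \<ge> 0" for z xs
    unfolding path_prod_def using assms(3) by (auto intro: prod_nonneg)
  have meas: "(\<lambda>xs. ennreal (path_prod (Suc n) f x y xs))
      \<in> borel_measurable (PiM (insert n {1..<n}) (\<lambda>_. lborel))"
    unfolding I[symmetric] using borel_measurable_path_prod[OF f] by measurable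
  have "(\<integral>\<^sup>+xs. ennreal (path_prod (Suc n) f x y xs) \<partial>PiM {1..<Suc n} (\<lambda>_. lborel))
      = (\<integral>\<^sup>+z. (\<integral>\<^sup>+xs. ennreal (path_prod (Suc n) f x y (xs(n := z))) \<partial>PiM {1..<n} (\<lambda>_. lborel)) \<partial>lborel)"
    unfolding I by (rule product_nn_integral_insert_rev[OF _ _ meas]) auto
  also have "\<dots> = (\<integral>\<^sup>+z. (\<integral>\<^sup>+xs. ennreal (path_prod n f z y xs) \<partial>PiM {1..<n} (\<lambda>_. lborel))
                 * ennreal (f z x) \<partial>lborel)"
  proof (rule nn_integral_cong)
    fix z
    have "(\<lambda>xs. ennreal (path_prod n f z y xs)) \<in> borel_measurable (PiM {1..<n} (\<lambda>_. lborel))"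
      using borel_measurable_path_prod[OF f] by measurable
    then show "(\<integral>\<^sup>+xs. ennreal (path_prod (Suc n) f x y (xs(n := z))) \<partial>PiM {1..<n} (\<lambda>_. lborel))
        = (\<integral>\<^sup>+xs. ennreal (path_prod n f z y xs) \<partial>PiM {1..<n} (\<lambda>_. lborel)) * ennreal (f z x)"
      by (simp add: path_prod_Suc_fun_upd[OF assms(1)] ennreal_mult nonneg assms(3) nn_integral_multc)
  qed
  finally show ?thesis .
qed

lemma borel_measurable_normal_density_drift:
  "(\<lambda>(u, v). normal_density (u + m) \<sigma> v) \<in> borel_measurable borel"
  unfolding borel_prod[symmetric] normal_density_def by measurable

lemma nn_integral_path_prod_normal_density_drift:
  assumes "n \<ge> 1" "\<sigma> > 0"
  shows "(\<integral>\<^sup>+xs. ennreal (path_prod n (\<lambda>u. normal_density (u + m) \<sigma>) x y xs) \<partial>PiM {1..<n} (\<lambda>_. lborel))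
       = ennreal (normal_density (y + real n * m) (sqrt (real n) * \<sigma>) x)"
  using assms(1)
proof (induction n arbitrary: x rule: nat_induct_at_least)
  case base
  show ?case
    by (simp add: PiM_empty path_prod_def path_pts_def nn_integral_count_space_finite)
next
  case (Suc n)
  let ?f = "\<lambda>u. normal_density (u + m) \<sigma>"
  have f: "case_prod ?f \<in> borel_measurable borel"
    by (rule borel_measurable_normal_density_drift)
  have "\<sigma>\<^sup>2 + (sqrt (real n) * \<sigma>)\<^sup>2 = real (Suc n) * \<sigma>\<^sup>2"
    by (simp add: power_mult_distrib algebra_simps)
  then have variance: "sqrt (\<sigma>\<^sup>2 + (sqrt (real n) * \<sigma>)\<^sup>2) = sqrt (real (Suc n)) * \<sigma>"
    using assms(2) by (simp add: real_sqrt_mult)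
  have "(\<integral>\<^sup>+xs. ennreal (path_prod (Suc n) ?f x y xs) \<partial>PiM {1..<Suc n} (\<lambda>_. lborel))
      = (\<integral>\<^sup>+z. (\<integral>\<^sup>+xs. ennreal (path_prod n ?f z y xs) \<partial>PiM {1..<n} (\<lambda>_. lborel))
                 * ennreal (?f z x) \<partial>lborel)"
    by (rule nn_integral_path_prod_Suc[OF Suc(1) f]) simp
  also have "\<dots> = (\<integral>\<^sup>+z. ennreal (?f z x * normal_density (y + real n * m) (sqrt (real n) * \<sigma>) z) \<partial>lborel)"
  proof (rule nn_integral_cong)
    fix z
    show "(\<integral>\<^sup>+xs. ennreal (path_prod n ?f z y xs) \<partial>PiM {1..<n} (\<lambda>_. lborel)) * ennreal (?f z x)
        = ennreal (?f z x * normal_density (y + real n * m) (sqrt (real n) * \<sigma>) z)"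
      unfolding Suc.IH by (simp add: ennreal_mult mult.commute)
  qed
  also have "\<dots> = ennreal (normal_density (y + real n * m + m) (sqrt (\<sigma>\<^sup>2 + (sqrt (real n) * \<sigma>)\<^sup>2)) x)"
    using Suc(1) assms(2) by (intro nn_integral_normal_density_drift_conv) auto
  also have "\<dots> = ennreal (normal_density (y + real (Suc n) * m) (sqrt (real (Suc n)) * \<sigma>) x)"
    unfolding variance by (simp add: algebra_simps)
  finally show ?case .
qed

theorem theorem2:
  fixes n :: nat and \<sigma> C a b x y :: real
  assumes "n \<ge> 1" and "\<sigma> > 0" and "C > 0"
  shows "pn n x y \<sigma> C a b = p1 x y (sqrt (real n) * \<sigma>) C a b"
proof -
  let ?f = "\<lambda>u. normal_density (u + a * \<sigma>\<^sup>2) \<sigma>"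
  have "pn n x y \<sigma> C a b = (LINT xs | PiM {1..<n} (\<lambda>_. lborel). path_prod n ?f x y xs)"
    unfolding pn_def path_prod_def using assms by (simp add: p1_eq_normal_density)
  also have "\<dots> = normal_density (y + real n * (a * \<sigma>\<^sup>2)) (sqrt (real n) * \<sigma>) x"
  proof (rule has_bochner_integral_integral_eq, rule has_bochner_integral_nn_integral)
    show "path_prod n ?f x y \<in> borel_measurable (PiM {1..<n} (\<lambda>_. lborel))"
      by (rule borel_measurable_path_prod borel_measurable_normal_density_drift)+
    show "(\<integral>\<^sup>+xs. ennreal (path_prod n ?f x y xs) \<partial>PiM {1..<n} (\<lambda>_. lborel))
        = ennreal (normal_density (y + real n * (a * \<sigma>\<^sup>2)) (sqrt (real n) * \<sigma>) x)"
      by (rule nn_integral_path_prod_normal_density_drift[OF assms(1,2)])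
  qed (auto simp: path_prod_def prod_nonneg)
  also have "\<dots> = p1 x y (sqrt (real n) * \<sigma>) C a b"
    using assms by (simp add: p1_eq_normal_density power_mult_distrib algebra_simps)
  finally show ?thesis .
qed

end
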